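(* For $k\in\mathbb{N}$, the sequence $\{\varphi_{k,n}\}_{n=2}^\infty$ defined by $$\varphi_{k,n}=n\prod_{j=0}^{k-1}\ell_j(n)\,\big[\ell_k(n)-\ell_k(n-1)\big]-1$$ is positive, decreasing, and $\lim_{n\to\infty}\varphi_{k,n}=0$.
   Context: For $x\ge1$ define $\ell_0(x)=1$, $\ell_1(x)=1+\ln x$, and recursively $\ell_j(x)=1+\ln\ell_{j-1}(x)$ for $j\ge2$. *)

theory Defs
  imports "HOL-Analysis.Analysis"
begin

fun ell :: "nat \<Rightarrow> real \<Rightarrow> real" where
  "ell 0 x = 1"
| "ell (Suc 0) x = 1 + ln x"
| "ell (Suc (Suc j)) x = 1 + ln (ell (Suc j) x)"

definition phi :: "nat \<Rightarrow> nat \<Rightarrow> real" where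
  "phi k n = real n * (\<Prod>j<k. ell j (real n)) * (ell k (real n) - ell k (real n - 1)) - 1"

end

theory Submission
  imports Defs "HOL-Real_Asymp.Real_Asymp"
begin

text \<open>
  Write \<open>F\<^sub>k(x) = x \<Prod>\<^sub>j\<^sub><\<^sub>k \<ell>\<^sub>j(x)\<close>, so that \<open>\<ell>\<^sub>k' = 1/F\<^sub>k\<close> for \<open>k \<ge> 1\<close> and
  \<open>\<phi>\<^sub>k\<^sub>,\<^sub>n = F\<^sub>k(n) (\<ell>\<^sub>k(n) - \<ell>\<^sub>k(n-1)) - 1\<close>. Since \<open>F\<^sub>k\<close> is increasing, the mean value
  theorem puts \<open>\<ell>\<^sub>k(n) - \<ell>\<^sub>k(n-1)\<close> strictly between \<open>1/F\<^sub>k(n)\<close> and \<open>1/F\<^sub>k(n-1)\<close>, giving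
  \<open>0 < \<phi>\<^sub>k\<^sub>,\<^sub>n \<le> F\<^sub>k(n)/F\<^sub>k(n-1) - 1\<close>. Because \<open>ln x = \<ell>\<^sub>1 - 1\<close> and \<open>ln \<ell>\<^sub>j = \<ell>\<^sub>j\<^sub>+\<^sub>1 - 1\<close> for \<open>j \<ge> 1\<close>,
  \<open>ln F\<^sub>k = \<Sum>\<^sub>j\<^sub>=\<^sub>1\<^sup>k (\<ell>\<^sub>j - 1)\<close>, whose derivative \<open>\<Sum>\<^sub>j\<^sub>=\<^sub>1\<^sup>k 1/F\<^sub>j\<close> is strictly decreasing
  and at most \<open>k/x\<close>. The bound \<open>k/x\<close> yields \<open>F\<^sub>k(n)/F\<^sub>k(n-1) \<le> exp (k/(n-1))\<close> and hence
  the limit. Strict log-concavity of \<open>F\<^sub>k\<close> yields monotonicity: the difference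
  \<open>F\<^sub>k(x+1) (\<ell>\<^sub>k(x+1) - \<ell>\<^sub>k(x+1-t)) - F\<^sub>k(x) (\<ell>\<^sub>k(x) - \<ell>\<^sub>k(x-t))\<close> vanishes at \<open>t = 0\<close>
  and has derivative \<open>F\<^sub>k(x+1)/F\<^sub>k(x+1-t) - F\<^sub>k(x)/F\<^sub>k(x-t) < 0\<close>, so it is negative at \<open>t = 1\<close>.
\<close>

lemma increment_less_of_DERIV_strict_antimono:
  fixes g g' :: "real \<Rightarrow> real"
  assumes deriv: "\<And>y. a \<le> y \<Longrightarrow> (g has_real_derivative g' y) (at y)"
    and antimono: "\<And>y z. a \<le> y \<Longrightarrow> y < z \<Longrightarrow> g' z < g' y"
    and "a \<le> b" "b < c" "0 < s"
  shows "g (c + s) - g c < g (b + s) - g b"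
proof -
  have "((\<lambda>y. g (y + s) - g y) has_real_derivative g' (y + s) - g' y) (at y)"
    if "b \<le> y" for y
    using deriv[of "y + s"] deriv[of y] that assms
    by (intro DERIV_diff) (auto simp flip: DERIV_shift)
  then obtain z where z: "b < z" "z < c"
    and eq: "(g (c + s) - g c) - (g (b + s) - g b) = (c - b) * (g' (z + s) - g' z)"
    using MVT2[OF \<open>b < c\<close>, of "\<lambda>y. g (y + s) - g y" "\<lambda>y. g' (y + s) - g' y"] by auto
  have "g' (z + s) < g' z"
    using antimono z assms by simp
  then have "(c - b) * (g' (z + s) - g' z) < 0"
    using \<open>b < c\<close> by (simp add: mult_pos_neg)
  then show ?thesis
    using eq by simp
qed

lemma increment_bounds_of_DERIV_inverse:
  fixes L F :: "real \<Rightarrow> real"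
  assumes deriv: "\<And>y. a \<le> y \<Longrightarrow> (L has_real_derivative 1 / F y) (at y)"
    and pos: "\<And>y. a \<le> y \<Longrightarrow> 0 < F y"
    and mono: "\<And>y z. a \<le> y \<Longrightarrow> y < z \<Longrightarrow> F y < F z"
    and "a + 1 \<le> x"
  shows "1 / F x < L x - L (x - 1) \<and> L x - L (x - 1) < 1 / F (x - 1)"
proof -
  obtain z where z: "x - 1 < z" "z < x" and eq: "L x - L (x - 1) = 1 / F z"
    using MVT2[of "x - 1" x L "\<lambda>y. 1 / F y"] deriv \<open>a + 1 \<le> x\<close> by auto
  have "F (x - 1) < F z" "F z < F x" "0 < F (x - 1)"
    using mono pos z \<open>a + 1 \<le> x\<close> by auto
  then show ?thesis
    unfolding eq by (auto intro: frac_less2)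
qed

lemma scaled_increment_decreasing_of_DERIV_inverse:
  fixes L F :: "real \<Rightarrow> real"
  assumes deriv: "\<And>y. a \<le> y \<Longrightarrow> (L has_real_derivative 1 / F y) (at y)"
    and log_concave: "\<And>b c s. a \<le> b \<Longrightarrow> b < c \<Longrightarrow> 0 < s \<Longrightarrow> F (c + s) / F c < F (b + s) / F b"
    and "a + 1 \<le> x"
  shows "F (x + 1) * (L (x + 1) - L x) < F x * (L x - L (x - 1))"
proof -
  define G where "G t = F (x + 1) * (L (x + 1) - L (x + 1 - t)) - F x * (L x - L (x - t))" for t
  define G' where "G' t = F (x + 1) / F (x + 1 - t) - F x / F (x - t)" for t
  have "(G has_real_derivative G' t) (at t)" if "0 \<le> t" "t \<le> 1" for t
  proof -
    have "((\<lambda>t. L (x + 1 - t)) has_real_derivative 1 / F (x + 1 - t) * -1) (at t)"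
      by (rule DERIV_chain2[where f = L])
        (use that \<open>a + 1 \<le> x\<close> in \<open>auto intro!: deriv derivative_eq_intros\<close>)
    moreover have "((\<lambda>t. L (x - t)) has_real_derivative 1 / F (x - t) * -1) (at t)"
      by (rule DERIV_chain2[where f = L])
        (use that \<open>a + 1 \<le> x\<close> in \<open>auto intro!: deriv derivative_eq_intros\<close>)
    ultimately have "(G has_real_derivative
        F (x + 1) * (0 - 1 / F (x + 1 - t) * -1) - F x * (0 - 1 / F (x - t) * -1)) (at t)"
      unfolding G_def by (intro DERIV_diff DERIV_cmult DERIV_const)
    then show ?thesis
      unfolding G'_def by simp
  qed
  then obtain t where t: "0 < t" "t < 1" and eq: "G 1 - G 0 = G' t"
    using MVT2[of 0 1 G G'] by auto
  have "F (x + 1 - t + t) / F (x + 1 - t) < F (x - t + t) / F (x - t)"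
    by (rule log_concave) (use t \<open>a + 1 \<le> x\<close> in auto)
  then have "G' t < 0"
    unfolding G'_def by simp
  moreover have "G 0 = 0"
    unfolding G_def by simp
  ultimately have "G 1 < 0"
    using eq by simp
  then show ?thesis
    unfolding G_def by simp
qed

lemma ell_ge_1: "1 \<le> x \<Longrightarrow> 1 \<le> ell j x"
  by (induction j x rule: ell.induct) auto

lemma ell_pos: "1 \<le> x \<Longrightarrow> 0 < ell j x"
  using ell_ge_1[of x j] by simp

lemma ell_mono: "1 \<le> x \<Longrightarrow> x \<le> y \<Longrightarrow> ell j x \<le> ell j y"
proof (induction j x rule: ell.induct)
  case (3 j x)
  then show ?case
    using ell_ge_1[of x "Suc j"] by simp
qed auto

definition ell_prod :: "nat \<Rightarrow> real \<Rightarrow> real" where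
  "ell_prod k x = x * (\<Prod>j<k. ell j x)"

lemma phi_eq_ell_prod: "phi k n = ell_prod k (real n) * (ell k (real n) - ell k (real n - 1)) - 1"
  unfolding phi_def ell_prod_def by (simp add: mult.assoc)

lemma ell_prod_Suc: "ell_prod (Suc k) x = ell_prod k x * ell k x"
  unfolding ell_prod_def by simp

lemma ell_prod_ge: "1 \<le> x \<Longrightarrow> x \<le> ell_prod k x"
  unfolding ell_prod_def
  using prod_ge_1[of "{..<k}" "\<lambda>j. ell j x"] ell_ge_1
  by (simp add: mult_le_cancel_left1)

lemma ell_prod_pos: "1 \<le> x \<Longrightarrow> 0 < ell_prod k x"
  using ell_prod_ge[of x k] by simp

lemma ell_prod_strict_mono: "1 \<le> x \<Longrightarrow> x < y \<Longrightarrow> ell_prod k x < ell_prod k y"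
proof -
  assume "1 \<le> x" "x < y"
  then have "(\<Prod>j<k. ell j x) \<le> (\<Prod>j<k. ell j y)" "1 \<le> (\<Prod>j<k. ell j x)"
    by (auto intro!: prod_mono prod_ge_1 ell_mono ell_ge_1 order.trans[OF zero_le_one])
  with \<open>1 \<le> x\<close> \<open>x < y\<close> show ?thesis
    unfolding ell_prod_def by (intro mult_less_le_imp_less) auto
qed

lemma DERIV_ell_Suc:
  "1 \<le> x \<Longrightarrow> (ell (Suc j) has_real_derivative 1 / ell_prod (Suc j) x) (at x)"
proof (induction j arbitrary: x)
  case 0
  have "ell (Suc 0) = (\<lambda>x. 1 + ln x)"
    by auto
  then show ?case
    using 0 by (auto simp: ell_prod_def intro!: derivative_eq_intros)
next
  case (Suc j)
  have "ell (Suc (Suc j)) = (\<lambda>x. 1 + ln (ell (Suc j) x))"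
    by auto
  moreover have pos: "0 < ell (Suc j) x" "0 < ell_prod (Suc j) x"
    using ell_pos ell_prod_pos Suc.prems by auto
  moreover have "((\<lambda>x. ln (ell (Suc j) x)) has_real_derivative
      inverse (ell (Suc j) x) * (1 / ell_prod (Suc j) x)) (at x)"
    by (rule DERIV_chain2[OF DERIV_ln[OF pos(1)] Suc.IH[OF Suc.prems]])
  then have "((\<lambda>x. 1 + ln (ell (Suc j) x)) has_real_derivative
      0 + inverse (ell (Suc j) x) * (1 / ell_prod (Suc j) x)) (at x)"
    by (intro DERIV_add DERIV_const)
  ultimately show ?case
    by (simp add: ell_prod_Suc[of "Suc j"] field_simps)
qed

lemma ln_ell_prod_Suc: "1 \<le> x \<Longrightarrow> ln (ell_prod (Suc k) x) = (\<Sum>j\<le>k. ell (Suc j) x - 1)"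
proof (induction k)
  case 0
  then show ?case
    by (simp add: ell_prod_def)
next
  case (Suc k)
  have "0 < ell_prod (Suc k) x" "0 < ell (Suc k) x"
    using ell_prod_pos ell_pos Suc.prems by auto
  then show ?case
    using Suc by (simp add: ell_prod_Suc[of "Suc k"] ln_mult)
qed

lemma DERIV_sum_ell_Suc:
  "1 \<le> x \<Longrightarrow> ((\<lambda>x. \<Sum>j\<le>k. ell (Suc j) x - 1) has_real_derivative
     (\<Sum>j\<le>k. 1 / ell_prod (Suc j) x)) (at x)"
  by (auto intro!: DERIV_sum DERIV_diff[where E = 0, simplified] DERIV_ell_Suc)

lemma ell_prod_log_concave:
  assumes "1 \<le> b" "b < c" "0 < s"
  shows "ell_prod (Suc k) (c + s) / ell_prod (Suc k) c
    < ell_prod (Suc k) (b + s) / ell_prod (Suc k) b"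
proof -
  let ?F = "ell_prod (Suc k)" and ?g = "\<lambda>x. \<Sum>j\<le>k. ell (Suc j) x - 1"
  have "?g (c + s) - ?g c < ?g (b + s) - ?g b"
  proof (rule increment_less_of_DERIV_strict_antimono[OF DERIV_sum_ell_Suc _ assms])
    fix y z :: real
    assume "1 \<le> y" "y < z"
    then show "(\<Sum>j\<le>k. 1 / ell_prod (Suc j) z) < (\<Sum>j\<le>k. 1 / ell_prod (Suc j) y)"
      by (intro sum_strict_mono frac_less2) (auto intro: ell_prod_pos ell_prod_strict_mono)
  qed
  then have "ln (?F (c + s)) - ln (?F c) < ln (?F (b + s)) - ln (?F b)"
    using assms by (simp add: ln_ell_prod_Suc)
  moreover have pos: "0 < ?F (c + s)" "0 < ?F c" "0 < ?F (b + s)" "0 < ?F b"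
    using assms by (auto intro!: ell_prod_pos)
  ultimately have "ln (?F (c + s) / ?F c) < ln (?F (b + s) / ?F b)"
    by (simp add: ln_div)
  then show ?thesis
    using pos by simp
qed

lemma ln_ell_prod_increment_le:
  assumes "2 \<le> x"
  shows "ln (ell_prod (Suc k) x) - ln (ell_prod (Suc k) (x - 1)) \<le> real (Suc k) / (x - 1)"
proof -
  have "\<exists>w. x - 1 < w \<and> w < x \<and>
      (\<Sum>j\<le>k. ell (Suc j) x - 1) - (\<Sum>j\<le>k. ell (Suc j) (x - 1) - 1)
        = (x - (x - 1)) * (\<Sum>j\<le>k. 1 / ell_prod (Suc j) w)"
    by (rule MVT2) (use assms in \<open>auto intro: DERIV_sum_ell_Suc\<close>)
  then obtain w where w: "x - 1 < w"
    and eq: "(\<Sum>j\<le>k. ell (Suc j) x - 1) - (\<Sum>j\<le>k. ell (Suc j) (x - 1) - 1)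
               = (\<Sum>j\<le>k. 1 / ell_prod (Suc j) w)"
    by auto
  have "(\<Sum>j\<le>k. 1 / ell_prod (Suc j) w) \<le> (\<Sum>j\<le>k. 1 / (x - 1))"
    using w assms ell_prod_ge[of w] by (intro sum_mono frac_le) (auto intro: order.trans[of _ w])
  then show ?thesis
    using eq assms by (simp add: ln_ell_prod_Suc)
qed

lemma ell_Suc_increment_bounds:
  "2 \<le> x \<Longrightarrow> 1 / ell_prod (Suc k) x < ell (Suc k) x - ell (Suc k) (x - 1)
    \<and> ell (Suc k) x - ell (Suc k) (x - 1) < 1 / ell_prod (Suc k) (x - 1)"
  by (rule increment_bounds_of_DERIV_inverse)
    (auto intro: DERIV_ell_Suc ell_prod_pos ell_prod_strict_mono)

lemma phi_Suc_pos:
  assumes "2 \<le> n"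
  shows "0 < phi (Suc k) n"
proof -
  have "1 / ell_prod (Suc k) n < ell (Suc k) n - ell (Suc k) (real n - 1)" "0 < ell_prod (Suc k) n"
    using ell_Suc_increment_bounds[of n k] ell_prod_pos[of n] assms by auto
  then show ?thesis
    by (simp add: phi_eq_ell_prod divide_less_eq mult.commute)
qed

lemma phi_Suc_decreasing: "2 \<le> n \<Longrightarrow> phi (Suc k) (Suc n) < phi (Suc k) n"
  using scaled_increment_decreasing_of_DERIV_inverse[of 1 "ell (Suc k)" "ell_prod (Suc k)" "real n"]
    DERIV_ell_Suc ell_prod_log_concave
  by (simp add: phi_eq_ell_prod add.commute)

lemma phi_Suc_le:
  assumes "2 \<le> n"
  shows "phi (Suc k) n \<le> exp (real (Suc k) / (real n - 1)) - 1"
proof -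
  let ?F = "ell_prod (Suc k)"
  have pos: "0 < ?F n" "0 < ?F (real n - 1)"
    using assms by (auto intro: ell_prod_pos)
  have "?F n * (ell (Suc k) n - ell (Suc k) (real n - 1)) \<le> ?F n * (1 / ?F (real n - 1))"
    using ell_Suc_increment_bounds[of n k] pos assms by (intro mult_left_mono) auto
  then have "phi (Suc k) n \<le> ?F n / ?F (real n - 1) - 1"
    by (simp add: phi_eq_ell_prod)
  also have "\<dots> = exp (ln (?F n) - ln (?F (real n - 1))) - 1"
    using pos by (simp add: exp_diff)
  also have "\<dots> \<le> exp (real (Suc k) / (real n - 1)) - 1"
    using ln_ell_prod_increment_le[of n k] assms by simp
  finally show ?thesis .
qed

theorem lemma2p4:
  fixes k :: nat
  assumes "k \<ge> 1"
  shows "(\<forall>n\<ge>2. phi k n > 0)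
       \<and> (\<forall>n\<ge>2. phi k (Suc n) < phi k n)
       \<and> (\<lambda>n. phi k n) \<longlonglongrightarrow> 0"
proof -
  obtain m where k: "k = Suc m"
    using assms by (cases k) auto
  have "(\<lambda>n. phi k n) \<longlonglongrightarrow> 0"
  proof (rule tendsto_sandwich)
    show "\<forall>\<^sub>F n in sequentially. 0 \<le> phi k n"
      "\<forall>\<^sub>F n in sequentially. phi k n \<le> exp (real k / (real n - 1)) - 1"
      using eventually_ge_at_top[of 2]
      by (eventually_elim, use k phi_Suc_pos phi_Suc_le in \<open>auto intro: less_imp_le\<close>)+
    show "(\<lambda>n. exp (real k / (real n - 1)) - 1) \<longlonglongrightarrow> 0"
      by real_asymp
  qed simp
  then show ?thesis
    using k phi_Suc_pos phi_Suc_decreasing by auto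
qed

end
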